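(* Let ${\mathbb K}$ be a field, $n\geqslant 2$, $N$ and $r$ positive integers. Let $L$ be a set of lines of $\mathrm{AG}_n({\mathbb K})$, let $D\subseteq\mathrm{PG}_{n-1}({\mathbb K})$ be the set of directions of the lines of $L$, and let $S$ be a set of points of $\mathrm{AG}_n({\mathbb K})$ such that every line of $L$ is incident with at least $N$ points of $S$. If $U$ is a subspace of ${\mathbb K}[X_1,\ldots,X_n]$ of polynomials of degree at most $rN-1$ with the property that $f^*\notin I_r(D)$ for all non-zero $f\in U$, then $$\binom{2r+n-2}{n}|S|\geqslant\dim U.$$
   Context: The direction of an affine line $\{u+\lambda v\}$ is the point $\langle v\rangle$ of $\mathrm{PG}_{n-1}({\mathbb K})$. For $j,c\in({\mathbb Z}_{\geqslant0})^n$ the $j$-Hasse derivative of $X^c=\prod_i X_i^{c_i}$ is $\partial^j(X^c)=\prod_{i=1}^n\binom{c_i}{j_i}X_i^{c_i-j_i}$ (with $\binom{a}{b}=0$ if $b>a$), extended linearly to polynomials; $\mathrm{wt}(j)=\sum_i j_i$. A polynomial $f$ has a zero of multiplicity $m$ at a point $u\in{\mathbb K}^n$ if $(\partial^j f)(u)=0$ for all $j$ with $\mathrm{wt}(j)\leqslant m-1$. $I_r(D)$ denotes the ideal of homogeneous polynomials of ${\mathbb K}[X_1,\ldots,X_n]$ which have zeros of multiplicity at least $r$ at all points of $D$ (i.e. at vectors $v$ with $\langle v\rangle\in D$). For $f\in{\mathbb K}[X_1,\ldots,X_n]$, $f^*$ denotes the sum of the terms of $f$ of highest total degree; degree means total degree.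 *)

theory Defs
  imports Complex_Main "HOL-Library.Function_Algebras"
begin

text \<open>Points of AG_n(K) and exponent vectors are functions on nat, supported on {0..<n}.
  A polynomial in K[X_1..X_n] is its coefficient function on exponent vectors,
  with finite support contained in the exponent vectors of n variables.\<close>

definition vecs :: "nat \<Rightarrow> (nat \<Rightarrow> 'a::zero) set" where
  "vecs n = {u. \<forall>i\<ge>n. u i = 0}"

type_synonym 'a mpoly = "(nat \<Rightarrow> nat) \<Rightarrow> 'a"

definition psupp :: "'a::zero mpoly \<Rightarrow> (nat \<Rightarrow> nat) set" where
  "psupp f = {c. f c \<noteq> 0}"

definition polys :: "nat \<Rightarrow> 'a::zero mpoly set" where
  "polys n = {f. finite (psupp f) \<and> psupp f \<subseteq> vecs n}"

definition wt :: "nat \<Rightarrow> (nat \<Rightarrow> nat) \<Rightarrow> nat" where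
  "wt n c = (\<Sum>i<n. c i)"

text \<open>total degree (of a nonzero polynomial)\<close>
definition tdeg :: "nat \<Rightarrow> 'a::zero mpoly \<Rightarrow> nat" where
  "tdeg n f = Max (wt n ` psupp f)"

definition top_part :: "nat \<Rightarrow> 'a::zero mpoly \<Rightarrow> 'a mpoly" where
  "top_part n f = (\<lambda>c. if wt n c = tdeg n f then f c else 0)"

definition homogeneous :: "nat \<Rightarrow> 'a::zero mpoly \<Rightarrow> bool" where
  "homogeneous n f \<longleftrightarrow> (\<exists>d. \<forall>c\<in>psupp f. wt n c = d)"

text \<open>value at u of the j-Hasse derivative of f\<close>
definition hasse_eval :: "nat \<Rightarrow> (nat \<Rightarrow> nat) \<Rightarrow> 'a::comm_ring_1 mpoly \<Rightarrow> (nat \<Rightarrow> 'a) \<Rightarrow> 'a" where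
  "hasse_eval n j f u =
     (\<Sum>c\<in>psupp f. f c * (\<Prod>i<n. of_nat (c i choose j i) * u i ^ (c i - j i)))"

definition zero_mult :: "nat \<Rightarrow> nat \<Rightarrow> 'a::comm_ring_1 mpoly \<Rightarrow> (nat \<Rightarrow> 'a) \<Rightarrow> bool" where
  "zero_mult n m f u \<longleftrightarrow> (\<forall>j\<in>vecs n. wt n j < m \<longrightarrow> hasse_eval n j f u = 0)"

definition aline :: "(nat \<Rightarrow> 'a::comm_ring_1) \<Rightarrow> (nat \<Rightarrow> 'a) \<Rightarrow> (nat \<Rightarrow> 'a) set" where
  "aline u v = {(\<lambda>i. u i + t * v i) | t. True}"

definition is_line :: "nat \<Rightarrow> (nat \<Rightarrow> 'a::comm_ring_1) set \<Rightarrow> bool" where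
  "is_line n l \<longleftrightarrow> (\<exists>u\<in>vecs n. \<exists>v\<in>vecs n. v \<noteq> (\<lambda>_. 0) \<and> l = aline u v)"

text \<open>The set of vectors v with <v> in D, where D is the set of directions of lines in L.\<close>
definition dir_vecs :: "nat \<Rightarrow> (nat \<Rightarrow> 'a::comm_ring_1) set set \<Rightarrow> (nat \<Rightarrow> 'a) set" where
  "dir_vecs n L = {v\<in>vecs n. v \<noteq> (\<lambda>_. 0) \<and> (\<exists>l\<in>L. \<exists>u\<in>vecs n. l = aline u v)}"

definition I_r :: "nat \<Rightarrow> nat \<Rightarrow> (nat \<Rightarrow> 'a::comm_ring_1) set \<Rightarrow> 'a mpoly set" where
  "I_r n r DV = {f\<in>polys n. homogeneous n f \<and> (\<forall>v\<in>DV. zero_mult n r f v)}"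

definition pscale :: "'a::times \<Rightarrow> 'a mpoly \<Rightarrow> 'a mpoly" where
  "pscale a f = (\<lambda>c. a * f c)"

lemma vector_space_pscale: "vector_space (pscale :: 'a::field \<Rightarrow> 'a mpoly \<Rightarrow> 'a mpoly)"
  by unfold_locales (simp_all add: pscale_def fun_eq_iff algebra_simps)

end

theory Submission
  imports Defs "HOL-Computational_Algebra.Polynomial"
begin

text \<open>Evaluating all Hasse derivatives of order at most \<open>2r - 2\<close> at the points of \<open>S\<close> is a
  linear map on \<open>U\<close> into a space of dimension at most \<open>binom(2r + n - 2, n) |S|\<close>, so it suffices
  that it is injective. Let \<open>f \<in> U\<close> be in its kernel, let \<open>u + t v\<close> be a line of \<open>L\<close> and
  \<open>|j| < r\<close>. The univariate polynomial \<open>t \<mapsto> (\<partial>\<^sup>j f)(u + t v)\<close> has degree at most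
  \<open>deg f - |j|\<close>, its coefficient in that degree is \<open>(\<partial>\<^sup>j f\<^sup>*)(v)\<close>, and by Taylor expansion
  it vanishes to order at least \<open>2r - 1 - |j| \<ge> r\<close> at each of the at least \<open>N\<close> parameters of
  points of \<open>S\<close> on the line. As \<open>deg f < rN\<close> it is zero, so \<open>f\<^sup>* \<in> I\<^sub>r(D)\<close>, which forces
  \<open>f = 0\<close>.\<close>

definition vecs_wt_le :: "nat \<Rightarrow> nat \<Rightarrow> (nat \<Rightarrow> nat) set" where
  "vecs_wt_le n k = {c \<in> vecs n. wt n c \<le> k}"

lemma wt_fun_upd_self: "wt n (c(n := a)) = wt n c"
  unfolding wt_def by (intro sum.cong) auto

lemma wt_Suc: "wt (Suc n) c = wt n c + c n"
  unfolding wt_def by simp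

lemma wt_add: "wt n (\<lambda>i. a i + b i) = wt n a + wt n b"
  unfolding wt_def by (simp add: sum.distrib)

lemma vecs_wt_le_0: "vecs_wt_le 0 k = {\<lambda>_. 0}"
  unfolding vecs_wt_le_def vecs_def wt_def by auto

lemma vecs_wt_le_Suc:
  "vecs_wt_le (Suc n) k = (\<Union>a\<le>k. (\<lambda>c. c(n := a)) ` vecs_wt_le n (k - a))"
proof (rule set_eqI, rule iffI)
  fix c assume c: "c \<in> vecs_wt_le (Suc n) k"
  have "c(n := 0) \<in> vecs_wt_le n (k - c n)" "c = (c(n := 0))(n := c n)" "c n \<le> k"
    using c unfolding vecs_wt_le_def vecs_def by (auto simp: wt_fun_upd_self wt_Suc)
  then show "c \<in> (\<Union>a\<le>k. (\<lambda>c. c(n := a)) ` vecs_wt_le n (k - a))" by blast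
next
  fix c assume "c \<in> (\<Union>a\<le>k. (\<lambda>c. c(n := a)) ` vecs_wt_le n (k - a))"
  then obtain a c' where "a \<le> k" "c' \<in> vecs_wt_le n (k - a)" "c = c'(n := a)" by auto
  then show "c \<in> vecs_wt_le (Suc n) k"
    unfolding vecs_wt_le_def vecs_def by (auto simp: wt_fun_upd_self wt_Suc)
qed

lemma finite_vecs_wt_le: "finite (vecs_wt_le n k)"
  by (induction n arbitrary: k) (simp_all add: vecs_wt_le_0 vecs_wt_le_Suc)

lemma card_vecs_wt_le: "card (vecs_wt_le n k) \<le> (k + n) choose n"
proof (induction n arbitrary: k)
  case 0
  then show ?case by (simp add: vecs_wt_le_0)
next
  case (Suc n)
  have "card (vecs_wt_le (Suc n) k) \<le> (\<Sum>a\<le>k. card ((\<lambda>c. c(n := a)) ` vecs_wt_le n (k - a)))"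
    unfolding vecs_wt_le_Suc by (rule card_UN_le) simp
  also have "\<dots> \<le> (\<Sum>a\<le>k. (k - a + n) choose n)"
    by (intro sum_mono order.trans[OF card_image_le[OF finite_vecs_wt_le] Suc.IH])
  also have "\<dots> = (\<Sum>a<Suc k. (Suc k - Suc a + n) choose n)"
    by (simp add: lessThan_Suc_atMost)
  also have "\<dots> = (\<Sum>b<Suc k. (b + n) choose n)"
    by (rule sum.nat_diff_reindex)
  also have "\<dots> = (\<Sum>b\<le>k. (n + b) choose b)"
    by (intro sum.cong)
      (auto simp: lessThan_Suc_atMost binomial_symmetric[of n "b + n" for b] add.commute)
  also have "\<dots> = Suc (n + k) choose k" by (rule sum_choose_lower)
  also have "\<dots> = (k + Suc n) choose Suc n"
    by (subst binomial_symmetric) (simp_all add: ac_simps)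
  finally show ?case .
qed

definition vecs_bounded :: "nat \<Rightarrow> nat \<Rightarrow> (nat \<Rightarrow> nat) set" where
  "vecs_bounded n D = {a \<in> vecs n. \<forall>i<n. a i \<le> D}"

lemma vecs_bounded_0: "vecs_bounded 0 D = {\<lambda>_. 0}"
  by (auto simp: vecs_bounded_def vecs_def)

lemma vecs_bounded_Suc:
  "vecs_bounded (Suc n) D = (\<lambda>(c, a). c(n := a)) ` (vecs_bounded n D \<times> {..D})"
proof (rule set_eqI, rule iffI)
  fix c assume c: "c \<in> vecs_bounded (Suc n) D"
  have "(c(n := 0), c n) \<in> vecs_bounded n D \<times> {..D}" "c = (c(n := 0))(n := c n)"
    using c unfolding vecs_bounded_def vecs_def by auto
  then show "c \<in> (\<lambda>(c, a). c(n := a)) ` (vecs_bounded n D \<times> {..D})"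
    by (metis (no_types, lifting) case_prod_conv image_eqI)
next
  fix c assume "c \<in> (\<lambda>(c, a). c(n := a)) ` (vecs_bounded n D \<times> {..D})"
  then show "c \<in> vecs_bounded (Suc n) D" unfolding vecs_bounded_def vecs_def by auto
qed

lemma inj_on_fun_upd_vecs_bounded: "inj_on (\<lambda>(c, a). c(n := a)) (vecs_bounded n D \<times> A)"
proof (rule inj_onI, clarsimp)
  fix c a c' a'
  assume c: "c \<in> vecs_bounded n D" "c' \<in> vecs_bounded n D" and eq: "c(n := a) = c'(n := a')"
  have "c i = c' i" for i
    using c fun_cong[OF eq, of i] by (cases "i = n") (auto simp: vecs_bounded_def vecs_def)
  then show "c = c' \<and> a = a'" using fun_cong[OF eq, of n] by auto
qed

lemma prod_sum_vecs_bounded: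
  fixes g :: "nat \<Rightarrow> nat \<Rightarrow> 'b::comm_semiring_1"
  shows "(\<Prod>i<n. \<Sum>a\<le>D. g i a) = (\<Sum>a\<in>vecs_bounded n D. \<Prod>i<n. g i (a i))"
proof (induction n)
  case 0
  then show ?case by (simp add: vecs_bounded_0)
next
  case (Suc n)
  have "(\<Prod>i<Suc n. \<Sum>a\<le>D. g i a)
      = (\<Sum>c\<in>vecs_bounded n D. \<Prod>i<n. g i (c i)) * (\<Sum>a\<le>D. g n a)"
    using Suc by simp
  also have "\<dots> = (\<Sum>(c, a)\<in>vecs_bounded n D \<times> {..D}. (\<Prod>i<n. g i (c i)) * g n a)"
    by (simp add: sum_product sum.cartesian_product)
  also have "\<dots> = (\<Sum>(c, a)\<in>vecs_bounded n D \<times> {..D}. \<Prod>i<Suc n. g i ((c(n := a)) i))"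
    by (intro sum.cong refl) (auto intro!: prod.cong)
  also have "\<dots> = (\<Sum>x\<in>vecs_bounded (Suc n) D. \<Prod>i<Suc n. g i (x i))"
    unfolding vecs_bounded_Suc
    by (subst sum.reindex[OF inj_on_fun_upd_vecs_bounded]) (simp add: case_prod_beta)
  finally show ?case .
qed

lemma choose_mult_choose_diff: "(c choose j) * ((c - j) choose a) = ((a + j) choose j) * (c choose (a + j))"
proof (cases "a + j \<le> c")
  case True
  have "(c choose (a + j)) * ((a + j) choose j) = (c choose j) * ((c - j) choose (a + j - j))"
    by (rule choose_mult) (use True in auto)
  then show ?thesis by (simp add: mult_ac)
next
  case False
  then consider "c < j" | "j \<le> c" "c - j < a" by linarith
  then show ?thesis by cases (use False in \<open>auto simp: binomial_eq_0\<close>)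
qed

lemma prod_monom: "(\<Prod>i\<in>I. monom (x i) (k i)) = monom (\<Prod>i\<in>I. x i) (\<Sum>i\<in>I. k i)"
  by (induction I rule: infinite_finite_induct) (auto simp: mult_monom)

lemma smult_sum_right: "smult a (\<Sum>x\<in>A. p x) = (\<Sum>x\<in>A. smult a (p x))"
  by (induction A rule: infinite_finite_induct) (auto simp: smult_add_right)

lemma degree_linear_poly_power_le: "degree ([:u, v:] ^ e) \<le> e"
  using degree_power_le[of "[:u, v:]" e] degree_pCons_le[of u "[:v:]"] by (simp add: order_trans)

lemma linear_poly_power_eq_sum_monom:
  fixes p v :: "'b::comm_semiring_1"
  assumes "e \<le> D"
  shows "[:p, v:] ^ e = (\<Sum>a\<le>D. monom (of_nat (e choose a) * p ^ (e - a) * v ^ a) a)"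
proof -
  have "coeff ([:p, v:] ^ e) a = of_nat (e choose a) * p ^ (e - a) * v ^ a" for a
  proof (cases "a \<le> e")
    case False
    then show ?thesis
      using degree_linear_poly_power_le[of p v e] by (simp add: coeff_eq_0 binomial_eq_0)
  qed (simp add: coeff_linear_poly_power mult_ac)
  then show ?thesis
    using poly_as_sum_of_monoms'[of "[:p, v:] ^ e" D] degree_linear_poly_power_le[of p v e] assms
    by simp
qed

lemma coeff_mult_at_degree_bounds:
  fixes p q :: "'b::comm_semiring_1 poly"
  assumes "degree p \<le> a" "degree q \<le> b"
  shows "coeff (p * q) (a + b) = coeff p a * coeff q b"
proof -
  have "coeff (p * q) (a + b) = (\<Sum>i\<le>a + b. coeff p i * coeff q (a + b - i))"
    by (simp add: coeff_mult)
  also have "\<dots> = (\<Sum>i\<in>{a}. coeff p i * coeff q (a + b - i))"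
  proof (rule sum.mono_neutral_right)
    show "\<forall>i\<in>{..a + b} - {a}. coeff p i * coeff q (a + b - i) = 0"
    proof
      fix i assume "i \<in> {..a + b} - {a}"
      then consider "a < i" | "b < a + b - i" by force
      then show "coeff p i * coeff q (a + b - i) = 0"
        by cases (use assms in \<open>simp_all add: coeff_eq_0\<close>)
    qed
  qed auto
  finally show ?thesis by simp
qed

lemma coeff_prod_at_degree_bounds:
  fixes P :: "'i \<Rightarrow> 'b::comm_semiring_1 poly"
  assumes "finite I" "\<And>i. i \<in> I \<Longrightarrow> degree (P i) \<le> k i"
  shows "degree (\<Prod>i\<in>I. P i) \<le> (\<Sum>i\<in>I. k i)
    \<and> coeff (\<Prod>i\<in>I. P i) (\<Sum>i\<in>I. k i) = (\<Prod>i\<in>I. coeff (P i) (k i))"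
  using assms
proof (induction I rule: finite_induct)
  case (insert x F)
  then have d: "degree (P x) \<le> k x" and IH: "degree (prod P F) \<le> sum k F"
      "coeff (prod P F) (sum k F) = (\<Prod>i\<in>F. coeff (P i) (k i))" by auto
  have "degree (P x * prod P F) \<le> k x + sum k F"
    using d IH(1) degree_mult_le[of "P x" "prod P F"] by linarith
  with insert show ?case
    using coeff_mult_at_degree_bounds[OF d IH(1)] IH(2) by simp
qed simp

lemma pcompose_power: "pcompose (p ^ k) q = pcompose p q ^ k"
  by (induction k) (simp_all add: pcompose_1 pcompose_mult)

lemma pcompose_monom_1: "pcompose (monom 1 m) [:b, 1:] = [:b, 1:] ^ m"
  for b :: "'a::comm_ring_1"
  by (simp add: monom_altdef pcompose_power pcompose_pCons)

lemma card_mult_le_degree: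
  fixes p :: "'a::idom poly"
  assumes "p \<noteq> 0" "\<And>t. t \<in> T \<Longrightarrow> m \<le> order t p"
  shows "m * card T \<le> degree p"
proof (cases "m = 0")
  case False
  have roots: "T \<subseteq> {t. poly p t = 0}"
    using assms False by (fastforce simp: order_root)
  then have "finite T"
    using poly_roots_finite[OF assms(1)] finite_subset by blast
  then have "m * card T \<le> (\<Sum>t\<in>T. order t p)"
    using assms(2) sum_mono[of T "\<lambda>_. m"] by (simp add: mult.commute)
  also have "\<dots> \<le> (\<Sum>t | poly p t = 0. order t p)"
    by (rule sum_mono2[OF poly_roots_finite[OF assms(1)] roots]) simp
  also have "\<dots> \<le> degree p" by (rule sum_order_le_degree[OF assms(1)])
  finally show ?thesis .
qed simp

text \<open>\<open>line_hasse n f j q v\<close> is the univariate polynomial \<open>t \<mapsto> (\<partial>\<^sup>j f)(q + t v)\<close>.\<close>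

definition line_hasse_monom ::
    "nat \<Rightarrow> (nat \<Rightarrow> nat) \<Rightarrow> (nat \<Rightarrow> nat) \<Rightarrow> (nat \<Rightarrow> 'a::comm_ring_1) \<Rightarrow> (nat \<Rightarrow> 'a) \<Rightarrow> 'a poly" where
  "line_hasse_monom n c j q v = (\<Prod>i<n. smult (of_nat (c i choose j i)) ([:q i, v i:] ^ (c i - j i)))"

definition line_hasse ::
    "nat \<Rightarrow> 'a::comm_ring_1 mpoly \<Rightarrow> (nat \<Rightarrow> nat) \<Rightarrow> (nat \<Rightarrow> 'a) \<Rightarrow> (nat \<Rightarrow> 'a) \<Rightarrow> 'a poly" where
  "line_hasse n f j q v = (\<Sum>c\<in>psupp f. smult (f c) (line_hasse_monom n c j q v))"

lemma pcompose_line_hasse: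
  "pcompose (line_hasse n f j q v) [:b, 1:] = line_hasse n f j (\<lambda>i. q i + b * v i) v"
  by (simp add: line_hasse_def line_hasse_monom_def pcompose_sum pcompose_smult pcompose_prod
      pcompose_power pcompose_pCons algebra_simps)

lemma line_hasse_monom_expand:
  assumes "\<And>i. i < n \<Longrightarrow> c i \<le> D"
  shows "line_hasse_monom n c j p v = (\<Sum>a\<in>vecs_bounded n D. monom
     (\<Prod>i<n. of_nat (c i choose j i) * of_nat ((c i - j i) choose a i) * p i ^ (c i - j i - a i) * v i ^ a i)
     (wt n a))"
proof -
  have "line_hasse_monom n c j p v = (\<Prod>i<n. \<Sum>a\<le>D. monom
      (of_nat (c i choose j i) * of_nat ((c i - j i) choose a) * p i ^ (c i - j i - a) * v i ^ a) a)"
    unfolding line_hasse_monom_def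
  proof (rule prod.cong[OF refl])
    fix i assume "i \<in> {..<n}"
    then have "c i - j i \<le> D" using assms by (meson diff_le_self order_trans lessThan_iff)
    then show "smult (of_nat (c i choose j i)) ([:p i, v i:] ^ (c i - j i)) = (\<Sum>a\<le>D. monom
      (of_nat (c i choose j i) * of_nat ((c i - j i) choose a) * p i ^ (c i - j i - a) * v i ^ a) a)"
      by (simp add: linear_poly_power_eq_sum_monom smult_sum_right smult_monom mult_ac)
  qed
  also have "\<dots> = (\<Sum>a\<in>vecs_bounded n D. \<Prod>i<n. monom
      (of_nat (c i choose j i) * of_nat ((c i - j i) choose a i) * p i ^ (c i - j i - a i) * v i ^ a i) (a i))"
    by (rule prod_sum_vecs_bounded)
  finally show ?thesis by (simp add: prod_monom wt_def)
qed

text \<open>Taylor expansion at \<open>t = 0\<close>, using \<open>\<partial>\<^sup>a \<partial>\<^sup>j = binom(a + j, j) \<partial>\<^sup>a\<^sup>+\<^sup>j\<close>.\<close>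

lemma line_hasse_taylor:
  fixes f :: "'a::comm_ring_1 mpoly"
  assumes D: "\<forall>c\<in>psupp f. \<forall>i<n. c i \<le> D"
  shows "line_hasse n f j p v = (\<Sum>a\<in>vecs_bounded n D. monom
     ((\<Prod>i<n. of_nat ((a i + j i) choose j i) * v i ^ a i) * hasse_eval n (\<lambda>i. a i + j i) f p)
     (wt n a))" (is "_ = ?taylor")
proof -
  have binom: "of_nat (c i choose j i) * of_nat ((c i - j i) choose a i) * p i ^ (c i - j i - a i) * v i ^ a i
      = (of_nat ((a i + j i) choose j i) * v i ^ a i) * (of_nat (c i choose (a i + j i)) * p i ^ (c i - (a i + j i)))"
    for c a i
  proof -
    have "(of_nat (c i choose j i) * of_nat ((c i - j i) choose a i) :: 'a)
        = of_nat ((a i + j i) choose j i) * of_nat (c i choose (a i + j i))"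
      by (simp only: of_nat_mult[symmetric] choose_mult_choose_diff)
    then show ?thesis by (simp add: diff_diff_left add.commute mult_ac)
  qed
  have "line_hasse n f j p v = (\<Sum>c\<in>psupp f. \<Sum>a\<in>vecs_bounded n D. monom (f c *
      (\<Prod>i<n. of_nat (c i choose j i) * of_nat ((c i - j i) choose a i) * p i ^ (c i - j i - a i) * v i ^ a i))
      (wt n a))"
    unfolding line_hasse_def
    using D by (intro sum.cong refl)
      (subst line_hasse_monom_expand[where D = D], auto simp: smult_sum_right smult_monom)
  also have "\<dots> = (\<Sum>a\<in>vecs_bounded n D. monom (\<Sum>c\<in>psupp f. f c *
      (\<Prod>i<n. of_nat (c i choose j i) * of_nat ((c i - j i) choose a i) * p i ^ (c i - j i - a i) * v i ^ a i))
      (wt n a))"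
    by (simp add: sum.swap[of _ "psupp f"] monom_sum)
  also have "\<dots> = ?taylor"
    unfolding binom by (simp add: hasse_eval_def prod.distrib sum_distrib_left mult_ac)
  finally show ?thesis .
qed

lemma monom_dvd_line_hasse:
  fixes f :: "'a::comm_ring_1 mpoly"
  assumes fin: "finite (psupp f)"
    and z: "\<And>a. a \<in> vecs n \<Longrightarrow> wt n a < m \<Longrightarrow> hasse_eval n (\<lambda>i. a i + j i) f p = 0"
  shows "monom 1 m dvd line_hasse n f j p v"
proof -
  have "finite ((\<lambda>(c, i). c i) ` (psupp f \<times> {..<n}))" using fin by simp
  then obtain D where "\<forall>x\<in>(\<lambda>(c, i). c i) ` (psupp f \<times> {..<n}). x \<le> D"
    using finite_nat_set_iff_bounded_le by blast
  then have D: "\<forall>c\<in>psupp f. \<forall>i<n. c i \<le> D" by auto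
  show ?thesis
    unfolding line_hasse_taylor[OF D]
  proof (rule dvd_sum)
    fix a assume a: "a \<in> vecs_bounded n D"
    show "monom 1 m dvd monom ((\<Prod>i<n. of_nat ((a i + j i) choose j i) * v i ^ a i)
        * hasse_eval n (\<lambda>i. a i + j i) f p) (wt n a)"
    proof (cases "wt n a < m")
      case True
      then show ?thesis using z a by (simp add: vecs_bounded_def)
    next
      case False
      then show ?thesis by (simp add: mult_monom dvd_def exI[of _ "monom _ (wt n a - m)"])
    qed
  qed
qed

lemma line_hasse_multiple_root:
  fixes f :: "'a::comm_ring_1 mpoly"
  assumes fin: "finite (psupp f)"
    and z: "\<And>a. a \<in> vecs n \<Longrightarrow> wt n a < m \<Longrightarrow> hasse_eval n (\<lambda>i. a i + j i) f (\<lambda>i. q i + t * v i) = 0"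
  shows "[:-t, 1:] ^ m dvd line_hasse n f j q v"
proof -
  have "monom 1 m dvd line_hasse n f j (\<lambda>i. q i + t * v i) v"
    by (rule monom_dvd_line_hasse[OF fin]) (rule z)
  then obtain k where k: "line_hasse n f j (\<lambda>i. q i + t * v i) v = monom 1 m * k"
    by (elim dvdE)
  have "line_hasse n f j q v = pcompose (line_hasse n f j (\<lambda>i. q i + t * v i) v) [:-t, 1:]"
    by (simp add: pcompose_line_hasse algebra_simps)
  also have "\<dots> = [:-t, 1:] ^ m * pcompose k [:-t, 1:]"
    by (simp add: k pcompose_mult pcompose_monom_1)
  finally show ?thesis by simp
qed

lemma psupp_top_part: "psupp (top_part n f) = {c \<in> psupp f. wt n c = tdeg n f}"
  by (auto simp: psupp_def top_part_def)

lemma hasse_monom_eq_0_if_wt_lt: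
  assumes "wt n c < wt n j"
  shows "(\<Prod>i<n. of_nat (c i choose j i) * u i ^ (c i - j i) :: 'a::comm_ring_1) = 0"
proof -
  have "\<exists>i<n. c i < j i"
  proof (rule ccontr)
    assume "\<not> (\<exists>i<n. c i < j i)"
    then have "wt n j \<le> wt n c" unfolding wt_def by (intro sum_mono) auto
    with assms show False by simp
  qed
  then obtain i where "i < n" "c i < j i" by blast
  then show ?thesis by (auto simp: binomial_eq_0 intro!: prod_zero bexI[of _ i])
qed

lemma hasse_eval_eq_sum_superset:
  assumes "finite C" "psupp f \<subseteq> C"
  shows "hasse_eval n j f u = (\<Sum>c\<in>C. f c * (\<Prod>i<n. of_nat (c i choose j i) * u i ^ (c i - j i)))"
  unfolding hasse_eval_def using assms by (intro sum.mono_neutral_left) (auto simp: psupp_def)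

lemma hasse_eval_eq_0_if_wt_lt:
  assumes "\<forall>c\<in>psupp f. wt n c < wt n j"
  shows "hasse_eval n j f u = 0"
  unfolding hasse_eval_def using assms by (simp add: hasse_monom_eq_0_if_wt_lt)

lemma line_hasse_monom_top:
  fixes u v :: "nat \<Rightarrow> 'a::comm_ring_1"
  assumes "wt n c \<le> d" "wt n j \<le> d"
  shows "degree (line_hasse_monom n c j u v) \<le> d - wt n j \<and>
    coeff (line_hasse_monom n c j u v) (d - wt n j) =
      (if wt n c = d then \<Prod>i<n. of_nat (c i choose j i) * v i ^ (c i - j i) else 0)"
proof (cases "\<exists>i<n. c i < j i")
  case True
  then obtain i where "i < n" "c i < j i" by blast
  then have "line_hasse_monom n c j u v = 0"
    "(\<Prod>i<n. of_nat (c i choose j i) * v i ^ (c i - j i)) = (0::'a)"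
    unfolding line_hasse_monom_def by (auto simp: binomial_eq_0 intro!: prod_zero bexI[of _ i])
  then show ?thesis by simp
next
  case False
  then have "\<forall>i<n. j i \<le> c i" by auto
  then have "(\<Sum>i<n. c i - j i) = wt n c - wt n j" "wt n j \<le> wt n c"
    unfolding wt_def by (auto intro: sum_subtractf_nat sum_mono)
  moreover have "degree (line_hasse_monom n c j u v) \<le> (\<Sum>i<n. c i - j i) \<and>
      coeff (line_hasse_monom n c j u v) (\<Sum>i<n. c i - j i) =
      (\<Prod>i<n. coeff (smult (of_nat (c i choose j i)) ([:u i, v i:] ^ (c i - j i))) (c i - j i))"
    unfolding line_hasse_monom_def
    by (rule coeff_prod_at_degree_bounds)
      (auto intro: order_trans[OF degree_smult_le] degree_linear_poly_power_le)
  ultimately show ?thesis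
    using assms by (cases "wt n c = d") (auto intro!: coeff_eq_0 simp: coeff_linear_poly_power)
qed

lemma line_hasse_top:
  fixes f :: "'a::comm_ring_1 mpoly"
  assumes fin: "finite (psupp f)" and w: "wt n j \<le> tdeg n f"
  shows "degree (line_hasse n f j u v) \<le> tdeg n f - wt n j"
    and "coeff (line_hasse n f j u v) (tdeg n f - wt n j) = hasse_eval n j (top_part n f) v"
proof -
  have dle: "wt n c \<le> tdeg n f" if "c \<in> psupp f" for c
    using fin that by (simp add: tdeg_def)
  show "degree (line_hasse n f j u v) \<le> tdeg n f - wt n j"
    unfolding line_hasse_def using line_hasse_monom_top[OF dle w]
    by (intro degree_sum_le fin order_trans[OF degree_smult_le]) auto
  have "coeff (line_hasse n f j u v) (tdeg n f - wt n j) = (\<Sum>c\<in>psupp f.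
      if wt n c = tdeg n f then f c * (\<Prod>i<n. of_nat (c i choose j i) * v i ^ (c i - j i)) else 0)"
    unfolding line_hasse_def coeff_sum coeff_smult
    by (intro sum.cong refl) (simp add: line_hasse_monom_top[OF dle w])
  also have "\<dots> = hasse_eval n j (top_part n f) v"
    unfolding hasse_eval_def psupp_top_part using fin
    by (simp add: sum.inter_filter top_part_def)
  finally show "coeff (line_hasse n f j u v) (tdeg n f - wt n j) = hasse_eval n j (top_part n f) v" .
qed

lemma inj_line_param:
  fixes u v :: "nat \<Rightarrow> 'a::idom"
  assumes "v \<noteq> (\<lambda>_. 0)"
  shows "inj (\<lambda>t i. u i + t * v i)"
proof (rule injI)
  fix t1 t2 assume eq: "(\<lambda>i. u i + t1 * v i) = (\<lambda>i. u i + t2 * v i)"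
  from assms obtain i where "v i \<noteq> 0" by auto
  with fun_cong[OF eq, of i] show "t1 = t2" by simp
qed

lemma hasse_top_part_vanishes_at_direction:
  fixes f :: "'a::field mpoly"
  assumes fin: "finite (psupp f)" and deg: "\<forall>c\<in>psupp f. wt n c < r * N"
    and S: "finite S" and line: "N \<le> card (aline u v \<inter> S)" and v: "v \<noteq> (\<lambda>_. 0)"
    and j: "j \<in> vecs n" "wt n j < r"
    and hz: "\<forall>s\<in>S. \<forall>j\<in>vecs n. wt n j \<le> 2 * r - 2 \<longrightarrow> hasse_eval n j f s = 0"
  shows "hasse_eval n j (top_part n f) v = 0"
proof (cases "\<forall>c\<in>psupp (top_part n f). wt n c < wt n j")
  case True
  then show ?thesis by (rule hasse_eval_eq_0_if_wt_lt)
next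
  case False
  then obtain c where c: "c \<in> psupp f" "wt n c = tdeg n f" and w: "wt n j \<le> tdeg n f"
    by (auto simp: psupp_top_part)
  define T where "T = {t. (\<lambda>i. u i + t * v i) \<in> S}"
  define m where "m = 2 * r - 1 - wt n j"
  define G where "G = line_hasse n f j u v"
  have lS: "aline u v \<inter> S = (\<lambda>t i. u i + t * v i) ` T"
    by (auto simp: aline_def T_def)
  have inj: "inj_on (\<lambda>t i. u i + t * v i) T"
    using inj_line_param[OF v] by (rule inj_on_subset) simp
  have "finite (aline u v \<inter> S)" using S by simp
  then have T: "finite T" "N \<le> card T"
    using line finite_imageD[OF _ inj] card_image[OF inj] unfolding lS by auto
  have root: "[:-t, 1:] ^ m dvd G" if "t \<in> T" for t
    unfolding G_def
  proof (rule line_hasse_multiple_root[OF fin])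
    fix a assume "a \<in> vecs n" "wt n a < m"
    then have "(\<lambda>i. a i + j i) \<in> vecs n" "wt n (\<lambda>i. a i + j i) \<le> 2 * r - 2"
      using j by (auto simp: vecs_def wt_add m_def)
    then show "hasse_eval n (\<lambda>i. a i + j i) f (\<lambda>i. u i + t * v i) = 0"
      using hz that by (auto simp: T_def)
  qed
  have "tdeg n f < r * N" using deg c by auto
  also have "\<dots> \<le> m * card T" using j(2) T(2) by (intro mult_le_mono) (auto simp: m_def)
  finally have "degree G < m * card T"
    using line_hasse_top(1)[OF fin w, of u v] unfolding G_def by linarith
  then have "G = 0"
    using card_mult_le_degree[of G T m] root by (auto simp: order_divides)
  then show ?thesis using line_hasse_top(2)[OF fin w, of u v] by (simp add: G_def)
qed

lemma top_part_mem_I_r: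
  fixes f :: "'a::field mpoly"
  assumes f: "f \<in> polys n" and deg: "\<forall>c\<in>psupp f. wt n c < r * N" and S: "finite S"
    and lines: "\<forall>l\<in>L. N \<le> card (l \<inter> S)"
    and hz: "\<forall>s\<in>S. \<forall>j\<in>vecs n. wt n j \<le> 2 * r - 2 \<longrightarrow> hasse_eval n j f s = 0"
  shows "top_part n f \<in> I_r n r (dir_vecs n L)"
proof -
  have fin: "finite (psupp f)" and "psupp f \<subseteq> vecs n" using f by (auto simp: polys_def)
  then have "top_part n f \<in> polys n" by (auto simp: polys_def psupp_top_part)
  moreover have "homogeneous n (top_part n f)" by (auto simp: homogeneous_def psupp_top_part)
  moreover have "zero_mult n r (top_part n f) v" if "v \<in> dir_vecs n L" for v
  proof -
    from that obtain u l where "v \<noteq> (\<lambda>_. 0)" "l \<in> L" "l = aline u v"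
      by (auto simp: dir_vecs_def)
    then show ?thesis
      unfolding zero_mult_def
      using hasse_top_part_vanishes_at_direction[OF fin deg S _ _ _ _ hz] lines by auto
  qed
  ultimately show ?thesis by (simp add: I_r_def)
qed

lemma sum_apply: "(\<Sum>x\<in>A. g x) y = (\<Sum>x\<in>A. g x y)"
  by (induction A rule: infinite_finite_induct) auto

lemma dim_le_card_if_separating_functionals:
  fixes scale :: "'a::field \<Rightarrow> 'b::ab_group_add \<Rightarrow> 'b" and \<phi> :: "'x \<Rightarrow> 'b \<Rightarrow> 'a"
  assumes vs: "vector_space scale" and U: "module.subspace scale U" and F: "finite F"
    and add: "\<And>x u w. \<phi> x (u + w) = \<phi> x u + \<phi> x w"
    and hom: "\<And>x a u. \<phi> x (scale a u) = a * \<phi> x u"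
    and sep: "\<And>u. u \<in> U \<Longrightarrow> (\<And>x. x \<in> F \<Longrightarrow> \<phi> x u = 0) \<Longrightarrow> u = 0"
  shows "vector_space.dim scale U \<le> card F"
proof -
  interpret V: vector_space scale by (rule vs)
  define fscale where "fscale a g = (\<lambda>x. a * g x)" for a :: 'a and g :: "'x \<Rightarrow> 'a"
  interpret W: vector_space fscale
    by unfold_locales (simp_all add: fscale_def fun_eq_iff algebra_simps)
  define \<Phi> where "\<Phi> u = (\<lambda>x. if x \<in> F then \<phi> x u else 0)" for u
  interpret \<Phi>: Vector_Spaces.linear scale fscale \<Phi>
    by unfold_locales (auto simp: \<Phi>_def fscale_def fun_eq_iff add hom)
  have inj: "inj_on \<Phi> U"
    unfolding \<Phi>.inj_on_iff_eq_0[OF U] by (auto simp: \<Phi>_def fun_eq_iff intro: sep)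
  obtain B where B: "B \<subseteq> U" "V.independent B" "U \<subseteq> V.span B" "card B = V.dim U"
    using V.basis_exists by blast
  have spanB: "V.span B = U" by (rule V.span_subspace[OF B(1) B(3) U])
  define \<Delta> where "\<Delta> = (\<lambda>x y. if y = x then (1::'a) else 0) ` F"
  have "\<Phi> u \<in> W.span \<Delta>" for u
  proof -
    have "\<Phi> u = (\<Sum>x\<in>F. fscale (\<Phi> u x) (\<lambda>y. if y = x then 1 else 0))"
      using F by (auto simp: fun_eq_iff fscale_def \<Phi>_def sum_apply if_distrib sum.delta cong: if_cong)
    also have "\<dots> \<in> W.span \<Delta>"
      by (intro W.span_sum W.span_scale W.span_base) (auto simp: \<Delta>_def)
    finally show ?thesis .
  qed
  then have "\<Phi> ` B \<subseteq> W.span \<Delta>" by blast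
  moreover have "W.independent (\<Phi> ` B)"
    using \<Phi>.dependent_inj_imageD B(2) inj spanB by blast
  ultimately have "card (\<Phi> ` B) \<le> card \<Delta>"
    using W.independent_span_bound F by (simp add: \<Delta>_def)
  also have "\<dots> \<le> card F" unfolding \<Delta>_def by (rule card_image_le[OF F])
  finally show ?thesis
    using B(4) card_image[OF inj_on_subset[OF inj B(1)]] by simp
qed

theorem theorem3p1:
  fixes n N r :: nat
    and L :: "(nat \<Rightarrow> 'a::field) set set"
    and S :: "(nat \<Rightarrow> 'a) set"
    and U :: "'a mpoly set"
  assumes "n \<ge> 2" and "N > 0" and "r > 0"
    and "\<forall>l\<in>L. is_line n l"
    and "S \<subseteq> vecs n"
    and "\<forall>l\<in>L. N \<le> card (l \<inter> S)"
    and "module.subspace pscale U"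
    and "U \<subseteq> polys n"
    and "\<forall>f\<in>U. \<forall>c\<in>psupp f. wt n c \<le> r * N - 1"
    and "\<forall>f\<in>U. f \<noteq> (\<lambda>_. 0) \<longrightarrow> top_part n f \<notin> I_r n r (dir_vecs n L)"
  shows "finite S \<longrightarrow> ((2 * r + n - 2) choose n) * card S \<ge> vector_space.dim pscale U"
proof
  assume S: "finite S"
  define C where "C = vecs_wt_le n (r * N - 1)"
  define \<phi> :: "(nat \<Rightarrow> 'a) \<times> (nat \<Rightarrow> nat) \<Rightarrow> 'a mpoly \<Rightarrow> 'a"
    where "\<phi> = (\<lambda>(s, j) f. \<Sum>c\<in>C. f c * (\<Prod>i<n. of_nat (c i choose j i) * s i ^ (c i - j i)))"
  have \<phi>: "\<phi> (s, j) f = hasse_eval n j f s" if "f \<in> U" for f s j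
    using that assms(8,9) finite_vecs_wt_le
    by (subst hasse_eval_eq_sum_superset[of C]) (auto simp: \<phi>_def C_def vecs_wt_le_def polys_def)
  have "vector_space.dim pscale U \<le> card (S \<times> vecs_wt_le n (2 * r - 2))"
  proof (rule dim_le_card_if_separating_functionals[OF vector_space_pscale assms(7)])
    fix f assume f: "f \<in> U" and "\<And>x. x \<in> S \<times> vecs_wt_le n (2 * r - 2) \<Longrightarrow> \<phi> x f = 0"
    then have "\<forall>s\<in>S. \<forall>j\<in>vecs n. wt n j \<le> 2 * r - 2 \<longrightarrow> hasse_eval n j f s = 0"
      by (auto simp: vecs_wt_le_def simp flip: \<phi>[OF f])
    then have "top_part n f \<in> I_r n r (dir_vecs n L)"
      using f assms(2,3,6,8,9) S
      by (intro top_part_mem_I_r) (fastforce dest: le_less_trans[OF _ diff_less[of 1 "r * N"]])+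
    then show "f = 0" using f assms(10) by (auto simp: zero_fun_def)
  qed (auto simp: S finite_vecs_wt_le \<phi>_def pscale_def algebra_simps sum.distrib sum_distrib_left
      split: prod.splits)
  also have "\<dots> \<le> card S * ((2 * r - 2 + n) choose n)"
    by (simp add: card_cartesian_product card_vecs_wt_le)
  finally show "vector_space.dim pscale U \<le> ((2 * r + n - 2) choose n) * card S"
    using assms(3) by (simp add: mult.commute)
qed

end
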